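(* Let $\{X_t\}_{t\in\mathbb N^+}$ be a real-valued process adapted to a filtration $\{\mathcal F_t\}_{t\in\mathbb N}$ with $\mathcal F_0$ trivial, such that for all $t\in\mathbb N^+$, $\mathbb E[X_t\mid\mathcal F_{t-1}]=\mu$ (a constant) and $\mathbb E[(X_t-\mu)^2\mid\mathcal F_{t-1}]\le\sigma^2$. Let $\{\lambda_t\}_{t\in\mathbb N^+}$ be any predictable process and let $\phi$ be a Catoni-type influence function. Then the processes $$M^{\mathsf C}_t=\prod_{i=1}^t\exp\left(\phi(\lambda_i(X_i-\mu))-\lambda_i^2\sigma^2/2\right),\qquad N^{\mathsf C}_t=\prod_{i=1}^t\exp\left(-\phi(\lambda_i(X_i-\mu))-\lambda_i^2\sigma^2/2\right)$$ (with $M^{\mathsf C}_0=N^{\mathsf C}_0=1$) are nonnegative supermartingales with respect to $\{\mathcal F_t\}$.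
   Context: A process $\{\lambda_t\}$ is predictable if each $\lambda_t$ is $\mathcal F_{t-1}$-measurable. A function $\phi:\mathbb R\to\mathbb R$ is a Catoni-type influence function if it is increasing and $-\log(1-x+x^2/2)\le\phi(x)\le\log(1+x+x^2/2)$ for all $x\in\mathbb R$. *)

theory Defs
  imports "HOL-Probability.Probability"
begin

definition catoni_type :: "(real \<Rightarrow> real) \<Rightarrow> bool" where
  "catoni_type \<phi> \<longleftrightarrow> mono \<phi> \<and>
     (\<forall>x. - ln (1 - x + x\<^sup>2 / 2) \<le> \<phi> x \<and> \<phi> x \<le> ln (1 + x + x\<^sup>2 / 2))"

definition supermartingale ::
    "'a measure \<Rightarrow> (nat \<Rightarrow> 'a measure) \<Rightarrow> (nat \<Rightarrow> 'a \<Rightarrow> real) \<Rightarrow> bool" where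
  "supermartingale M F Y \<longleftrightarrow>
     (\<forall>t. Y t \<in> borel_measurable (F t) \<and> integrable M (Y t)) \<and>
     (\<forall>s t. s \<le> t \<longrightarrow> (AE x in M. real_cond_exp M (F s) (Y t) x \<le> Y s x))"

end

theory Submission
  imports Defs
begin

text \<open>Write \<open>D = X\<^sub>t - \<mu>\<close> and \<open>L = \<lambda>\<^sub>t\<close>. The Catoni bounds give
  \<open>exp (\<plusminus>\<phi> (L D)) \<le> 1 \<plusminus> L D + L\<^sup>2 D\<^sup>2 / 2\<close>. Given \<open>\<F>\<^sub>t\<^sub>-\<^sub>1\<close>, the factor \<open>L\<close> is known, the
  linear term has conditional mean zero and the quadratic one has conditional mean at most
  \<open>L\<^sup>2 \<sigma>\<^sup>2 / 2\<close>; hence the conditional mean of \<open>exp (\<plusminus>\<phi> (L D) - L\<^sup>2 \<sigma>\<^sup>2 / 2)\<close> is at most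
  \<open>(1 + L\<^sup>2 \<sigma>\<^sup>2 / 2) exp (- L\<^sup>2 \<sigma>\<^sup>2 / 2) \<le> 1\<close>. The factors are not known to be integrable
  beforehand, so all of this is done against an arbitrary nonnegative integrable
  \<open>\<F>\<^sub>t\<^sub>-\<^sub>1\<close>-measurable weight, which gives integrability of the products and the
  supermartingale inequality in one go.\<close>

lemma mult_exp_neg_half_le_two:
  fixes u :: real
  assumes "0 \<le> u"
  shows "u * exp (- u / 2) \<le> 2"
proof -
  have "u \<le> 2 * exp (u / 2)" using exp_ge_add_one_self[of "u / 2"] by linarith
  then have "u * exp (- u / 2) \<le> 2 * exp (u / 2) * exp (- u / 2)" by (simp add: mult_right_mono)
  also have "\<dots> = 2" by (simp add: exp_minus field_simps)
  finally show ?thesis .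
qed

lemma exp_neg_half_mult_le_one:
  fixes u :: real
  shows "exp (- u / 2) * (1 + u / 2) \<le> 1"
proof -
  have "exp (- u / 2) * (1 + u / 2) \<le> exp (- u / 2) * exp (u / 2)"
    using exp_ge_add_one_self[of "u / 2"] by (simp add: mult_left_mono)
  also have "\<dots> = 1" by (simp add: exp_minus field_simps)
  finally show ?thesis .
qed

lemma abs_le_one_plus_square:
  fixes y :: real
  shows "\<bar>y\<bar> \<le> 1 + y\<^sup>2"
proof -
  have "0 \<le> (\<bar>y\<bar> - 1)\<^sup>2" by simp
  also have "\<dots> = y\<^sup>2 - 2 * \<bar>y\<bar> + 1" by (simp add: power2_eq_square algebra_simps)
  finally show ?thesis by (simp add: add_increasing)
qed

lemma catoni_type_exp_le:
  assumes "catoni_type \<phi>"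
  shows "exp (\<phi> y) \<le> 1 + y + y\<^sup>2 / 2"
proof -
  have "0 < ((1 + y)\<^sup>2 + 1) / 2" by (simp add: add_nonneg_pos)
  also have "\<dots> = 1 + y + y\<^sup>2 / 2" by (simp add: power2_eq_square field_simps)
  finally have pos: "0 < 1 + y + y\<^sup>2 / 2" .
  have "exp (\<phi> y) \<le> exp (ln (1 + y + y\<^sup>2 / 2))"
    using assms unfolding catoni_type_def by simp
  then show ?thesis using pos by simp
qed

lemma catoni_type_exp_neg_le:
  assumes "catoni_type \<phi>"
  shows "exp (- \<phi> y) \<le> 1 - y + y\<^sup>2 / 2"
proof -
  have "0 < ((1 - y)\<^sup>2 + 1) / 2" by (simp add: add_nonneg_pos)
  also have "\<dots> = 1 - y + y\<^sup>2 / 2" by (simp add: power2_eq_square field_simps)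
  finally have pos: "0 < 1 - y + y\<^sup>2 / 2" .
  have "exp (- \<phi> y) \<le> exp (ln (1 - y + y\<^sup>2 / 2))"
    using assms unfolding catoni_type_def by (simp add: minus_le_iff)
  then show ?thesis using pos by simp
qed

lemma integrable_mult_of_integrable_mult_square:
  fixes W Z :: "'a \<Rightarrow> real"
  assumes W: "integrable M W" and WZ2: "integrable M (\<lambda>x. W x * (Z x)\<^sup>2)"
    and [measurable]: "Z \<in> borel_measurable M"
    and W_nonneg: "\<And>x. x \<in> space M \<Longrightarrow> 0 \<le> W x"
  shows "integrable M (\<lambda>x. W x * Z x)"
proof (rule Bochner_Integration.integrable_bound)
  show "integrable M (\<lambda>x. W x + W x * (Z x)\<^sup>2)" using W WZ2 by simp
  show "(\<lambda>x. W x * Z x) \<in> borel_measurable M" using W by measurable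
  show "AE x in M. norm (W x * Z x) \<le> norm (W x + W x * (Z x)\<^sup>2)"
  proof (rule AE_I2)
    fix x assume x: "x \<in> space M"
    have "norm (W x * Z x) = W x * \<bar>Z x\<bar>" using W_nonneg[OF x] by (simp add: abs_mult)
    also have "\<dots> \<le> W x * (1 + (Z x)\<^sup>2)"
      by (rule mult_left_mono[OF abs_le_one_plus_square W_nonneg[OF x]])
    also have "\<dots> = norm (W x + W x * (Z x)\<^sup>2)"
      using W_nonneg[OF x] by (simp add: algebra_simps)
    finally show "norm (W x * Z x) \<le> norm (W x + W x * (Z x)\<^sup>2)" .
  qed
qed

context sigma_finite_subalgebra
begin

lemma AE_real_cond_exp_le_of_set_integral_le:
  fixes f g :: "'a \<Rightarrow> real"
  assumes f: "integrable M f" and g: "integrable M g"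
    and [measurable]: "g \<in> borel_measurable F"
    and le: "\<And>A. A \<in> sets F \<Longrightarrow> (\<integral>x. indicator A x * f x \<partial>M) \<le> (\<integral>x. indicator A x * g x \<partial>M)"
  shows "AE x in M. real_cond_exp M F f x \<le> g x"
proof -
  define h where "h = real_cond_exp M F f"
  have h: "integrable M h" unfolding h_def using f by (rule real_cond_exp_int(1))
  have [measurable]: "h \<in> borel_measurable F" "f \<in> borel_measurable M"
    unfolding h_def using f by auto
  define A where "A = {x \<in> space F. g x < h x}"
  have A_F [measurable]: "A \<in> sets F" unfolding A_def by measurable
  have A_M: "A \<in> sets M" using A_F subalg unfolding subalgebra_def by auto
  have space_F: "space F = space M" using subalg unfolding subalgebra_def by auto
  define k where "k = (\<lambda>x. indicator A x * h x - indicator A x * g x)"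
  have k: "integrable M k"
    unfolding k_def using integrable_mult_indicator[OF A_M h] integrable_mult_indicator[OF A_M g]
    by simp
  have k_nonneg: "\<And>x. 0 \<le> k x" unfolding k_def A_def by (auto split: split_indicator)
  have "(\<integral>x. indicator A x * h x \<partial>M) = (\<integral>x. indicator A x * f x \<partial>M)"
    unfolding h_def
    by (rule real_cond_exp_intg(2)) (use integrable_mult_indicator[OF A_M f] in simp_all)
  then have "(\<integral>x. k x \<partial>M) \<le> 0"
    unfolding k_def using le[OF A_F] integrable_mult_indicator[OF A_M h]
      integrable_mult_indicator[OF A_M g] by simp
  then have "(\<integral>x. k x \<partial>M) = 0" using integral_nonneg_AE[of k M] k_nonneg by (simp add: antisym)
  then have "AE x in M. k x = 0" using integral_nonneg_eq_0_iff_AE[OF k] k_nonneg by simp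
  with AE_space show ?thesis
    by eventually_elim (auto simp: k_def A_def h_def space_F indicator_def)
qed

lemma integral_mult_le_of_AE_nn_cond_exp_le:
  fixes V Z :: "'a \<Rightarrow> real"
  assumes [measurable]: "V \<in> borel_measurable F" "Z \<in> borel_measurable M"
    and V_nonneg: "\<And>x. x \<in> space M \<Longrightarrow> 0 \<le> V x"
    and Z_nonneg: "\<And>x. x \<in> space M \<Longrightarrow> 0 \<le> Z x"
    and "0 \<le> c" and Vc: "integrable M (\<lambda>x. V x * c)"
    and bound: "AE x in M. nn_cond_exp M F (\<lambda>y. ennreal (Z y)) x \<le> ennreal c"
  shows "integrable M (\<lambda>x. V x * Z x)" and "(\<integral>x. V x * Z x \<partial>M) \<le> (\<integral>x. V x * c \<partial>M)"
proof -
  have [measurable]: "V \<in> borel_measurable M" by (rule measurable_from_subalg[OF subalg]) simp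
  have "(\<integral>\<^sup>+x. ennreal (V x * Z x) \<partial>M) = (\<integral>\<^sup>+x. ennreal (V x) * ennreal (Z x) \<partial>M)"
    by (rule nn_integral_cong) (simp add: V_nonneg Z_nonneg ennreal_mult)
  also have "\<dots> = (\<integral>\<^sup>+x. ennreal (V x) * nn_cond_exp M F (\<lambda>y. ennreal (Z y)) x \<partial>M)"
    by (rule nn_cond_exp_intg[symmetric]) measurable
  also have "\<dots> \<le> (\<integral>\<^sup>+x. ennreal (V x) * ennreal c \<partial>M)"
    by (rule nn_integral_mono_AE, rule eventually_mono[OF bound]) (simp add: mult_left_mono)
  also have "\<dots> = (\<integral>\<^sup>+x. ennreal (V x * c) \<partial>M)"
    by (rule nn_integral_cong) (simp add: V_nonneg \<open>0 \<le> c\<close> ennreal_mult)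
  finally have nn_le: "(\<integral>\<^sup>+x. ennreal (V x * Z x) \<partial>M) \<le> (\<integral>\<^sup>+x. ennreal (V x * c) \<partial>M)" .
  have Vc_finite: "(\<integral>\<^sup>+x. ennreal (V x * c) \<partial>M) < \<infinity>"
    using Vc unfolding integrable_iff_bounded by (simp add: V_nonneg \<open>0 \<le> c\<close> cong: nn_integral_cong)
  show "integrable M (\<lambda>x. V x * Z x)"
    by (rule integrableI_nonneg)
      (use nn_le Vc_finite in \<open>auto simp: V_nonneg Z_nonneg intro!: AE_I2\<close>)
  have "(\<integral>x. V x * Z x \<partial>M) = enn2real (\<integral>\<^sup>+x. ennreal (V x * Z x) \<partial>M)"
    by (rule integral_eq_nn_integral) (auto simp: V_nonneg Z_nonneg intro!: AE_I2)
  also have "\<dots> \<le> enn2real (\<integral>\<^sup>+x. ennreal (V x * c) \<partial>M)"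
    using nn_le Vc_finite by (intro enn2real_mono) auto
  also have "\<dots> = (\<integral>x. V x * c \<partial>M)"
    by (rule integral_eq_nn_integral[symmetric]) (auto simp: V_nonneg \<open>0 \<le> c\<close> intro!: AE_I2)
  finally show "(\<integral>x. V x * Z x \<partial>M) \<le> (\<integral>x. V x * c \<partial>M)" .
qed

end

context finite_measure_subalgebra
begin

lemma integral_mult_centered_eq_zero:
  fixes V X :: "'a \<Rightarrow> real"
  assumes X: "integrable M X" and mean: "AE x in M. real_cond_exp M F X x = \<mu>"
    and [measurable]: "V \<in> borel_measurable F"
    and VX: "integrable M (\<lambda>x. V x * (X x - \<mu>))"
  shows "(\<integral>x. V x * (X x - \<mu>) \<partial>M) = 0"
proof -
  have [measurable]: "X \<in> borel_measurable M" using X by auto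
  have [measurable]: "V \<in> borel_measurable M" by (rule measurable_from_subalg[OF subalg]) simp
  have "AE x in M. real_cond_exp M F (\<lambda>x. X x - \<mu>) x = real_cond_exp M F X x - real_cond_exp M F (\<lambda>_. \<mu>) x"
    using X by (intro real_cond_exp_diff) auto
  moreover have "AE x in M. real_cond_exp M F (\<lambda>_. \<mu>) x = \<mu>"
    by (intro real_cond_exp_F_meas) auto
  ultimately have centered: "AE x in M. real_cond_exp M F (\<lambda>x. X x - \<mu>) x = 0"
    using mean by eventually_elim simp
  have "(\<integral>x. V x * (X x - \<mu>) \<partial>M) = (\<integral>x. V x * real_cond_exp M F (\<lambda>x. X x - \<mu>) x \<partial>M)"
    using VX by (intro real_cond_exp_intg(2)[symmetric]) auto
  also have "\<dots> = (\<integral>x. 0 \<partial>M)"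
    using centered by (intro integral_cong_AE) auto
  finally show ?thesis by simp
qed

lemma integral_mult_exp_le_variance_bound:
  fixes W L X :: "'a \<Rightarrow> real" and \<psi> :: "real \<Rightarrow> real"
  assumes [measurable]: "W \<in> borel_measurable F" "L \<in> borel_measurable F"
      "X \<in> borel_measurable M" "\<psi> \<in> borel_measurable borel"
    and W_nonneg: "\<And>x. x \<in> space M \<Longrightarrow> 0 \<le> W x" and W: "integrable M W"
    and WL2\<sigma>2: "integrable M (\<lambda>x. W x * (L x)\<^sup>2 * \<sigma>\<^sup>2)"
    and X: "integrable M X"
    and mean: "AE x in M. real_cond_exp M F X x = \<mu>"
    and var: "AE x in M. nn_cond_exp M F (\<lambda>y. ennreal ((X y - \<mu>)\<^sup>2)) x \<le> ennreal (\<sigma>\<^sup>2)"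
    and exp_\<psi>_le: "\<And>y. exp (\<psi> y) \<le> 1 + s * y + y\<^sup>2 / 2"
  shows "integrable M (\<lambda>x. W x * exp (\<psi> (L x * (X x - \<mu>))))"
    and "(\<integral>x. W x * exp (\<psi> (L x * (X x - \<mu>))) \<partial>M) \<le> (\<integral>x. W x + W x * (L x)\<^sup>2 * \<sigma>\<^sup>2 / 2 \<partial>M)"
proof -
  have [measurable]: "W \<in> borel_measurable M" "L \<in> borel_measurable M"
    by (rule measurable_from_subalg[OF subalg], simp)+
  define D where "D x = X x - \<mu>" for x
  have [measurable]: "D \<in> borel_measurable M" unfolding D_def by measurable
  have WL2D2: "integrable M (\<lambda>x. W x * (L x)\<^sup>2 * (D x)\<^sup>2)"
    and quadratic: "(\<integral>x. W x * (L x)\<^sup>2 * (D x)\<^sup>2 \<partial>M) \<le> (\<integral>x. W x * (L x)\<^sup>2 * \<sigma>\<^sup>2 \<partial>M)"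
    using integral_mult_le_of_AE_nn_cond_exp_le[of "\<lambda>x. W x * (L x)\<^sup>2" "\<lambda>x. (D x)\<^sup>2" "\<sigma>\<^sup>2"]
      W_nonneg WL2\<sigma>2 var by (simp_all add: D_def)
  have WLD: "integrable M (\<lambda>x. W x * L x * D x)"
    using integrable_mult_of_integrable_mult_square[OF W, of "\<lambda>x. L x * D x"] WL2D2 W_nonneg
    by (simp add: power_mult_distrib mult.assoc)
  have linear: "(\<integral>x. W x * L x * D x \<partial>M) = 0"
    using integral_mult_centered_eq_zero[OF X mean, of "\<lambda>x. W x * L x"] WLD by (simp add: D_def)
  define R where "R x = W x + s * (W x * L x * D x) + W x * (L x)\<^sup>2 * (D x)\<^sup>2 / 2" for x
  have R: "integrable M R" unfolding R_def using W WL2D2 WLD by simp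
  have le_R: "W x * exp (\<psi> (L x * (X x - \<mu>))) \<le> R x" if x: "x \<in> space M" for x
  proof -
    have "W x * exp (\<psi> (L x * (X x - \<mu>))) \<le> W x * (1 + s * (L x * D x) + (L x * D x)\<^sup>2 / 2)"
      unfolding D_def by (rule mult_left_mono[OF exp_\<psi>_le W_nonneg[OF x]])
    also have "\<dots> = R x" by (simp add: R_def algebra_simps power_mult_distrib)
    finally show ?thesis .
  qed
  show integrable: "integrable M (\<lambda>x. W x * exp (\<psi> (L x * (X x - \<mu>))))"
    by (rule Bochner_Integration.integrable_bound[OF R])
      (measurable, auto intro!: AE_I2 order.trans[OF le_R abs_ge_self] simp: W_nonneg)
  have "(\<integral>x. W x * exp (\<psi> (L x * (X x - \<mu>))) \<partial>M) \<le> (\<integral>x. R x \<partial>M)"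
    by (rule integral_mono[OF integrable R le_R])
  also have "\<dots> = (\<integral>x. W x \<partial>M) + s * (\<integral>x. W x * L x * D x \<partial>M)
      + (\<integral>x. W x * (L x)\<^sup>2 * (D x)\<^sup>2 \<partial>M) / 2"
    unfolding R_def using W WL2D2 WLD by simp
  also have "\<dots> \<le> (\<integral>x. W x + W x * (L x)\<^sup>2 * \<sigma>\<^sup>2 / 2 \<partial>M)"
    using linear quadratic W WL2\<sigma>2 by simp
  finally show "(\<integral>x. W x * exp (\<psi> (L x * (X x - \<mu>))) \<partial>M)
      \<le> (\<integral>x. W x + W x * (L x)\<^sup>2 * \<sigma>\<^sup>2 / 2 \<partial>M)" .
qed

lemma integral_mult_exp_increment_le:
  fixes P L X :: "'a \<Rightarrow> real" and \<psi> :: "real \<Rightarrow> real"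
  assumes [measurable]: "P \<in> borel_measurable F" "L \<in> borel_measurable F"
      "X \<in> borel_measurable M" "\<psi> \<in> borel_measurable borel"
    and P_nonneg: "\<And>x. x \<in> space M \<Longrightarrow> 0 \<le> P x" and P: "integrable M P"
    and X: "integrable M X"
    and mean: "AE x in M. real_cond_exp M F X x = \<mu>"
    and var: "AE x in M. nn_cond_exp M F (\<lambda>y. ennreal ((X y - \<mu>)\<^sup>2)) x \<le> ennreal (\<sigma>\<^sup>2)"
    and exp_\<psi>_le: "\<And>y. exp (\<psi> y) \<le> 1 + s * y + y\<^sup>2 / 2"
  shows "integrable M (\<lambda>x. P x * exp (\<psi> (L x * (X x - \<mu>)) - (L x)\<^sup>2 * \<sigma>\<^sup>2 / 2))"
    and "(\<integral>x. P x * exp (\<psi> (L x * (X x - \<mu>)) - (L x)\<^sup>2 * \<sigma>\<^sup>2 / 2) \<partial>M) \<le> (\<integral>x. P x \<partial>M)"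
proof -
  have [measurable]: "P \<in> borel_measurable M" "L \<in> borel_measurable M"
    by (rule measurable_from_subalg[OF subalg], simp)+
  define W where "W x = P x * exp (- ((L x)\<^sup>2 * \<sigma>\<^sup>2) / 2)" for x
  have [measurable]: "W \<in> borel_measurable F" "W \<in> borel_measurable M"
    unfolding W_def by measurable
  have W_nonneg: "\<And>x. x \<in> space M \<Longrightarrow> 0 \<le> W x" unfolding W_def using P_nonneg by simp
  have W: "integrable M W"
    by (rule Bochner_Integration.integrable_bound[OF P \<open>W \<in> borel_measurable M\<close>])
      (auto intro!: AE_I2 simp: W_def P_nonneg mult_left_le)
  have WL2\<sigma>2_le: "W x * (L x)\<^sup>2 * \<sigma>\<^sup>2 \<le> 2 * P x" if x: "x \<in> space M" for x
  proof -
    have "W x * (L x)\<^sup>2 * \<sigma>\<^sup>2 = P x * ((L x)\<^sup>2 * \<sigma>\<^sup>2 * exp (- ((L x)\<^sup>2 * \<sigma>\<^sup>2) / 2))"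
      by (simp add: W_def mult_ac)
    also have "\<dots> \<le> P x * 2"
      by (rule mult_left_mono[OF mult_exp_neg_half_le_two P_nonneg[OF x]]) simp
    finally show ?thesis by simp
  qed
  have WL2\<sigma>2: "integrable M (\<lambda>x. W x * (L x)\<^sup>2 * \<sigma>\<^sup>2)"
  proof (rule Bochner_Integration.integrable_bound[of M "\<lambda>x. 2 * P x"])
    show "integrable M (\<lambda>x. 2 * P x)" using P by simp
    show "(\<lambda>x. W x * (L x)\<^sup>2 * \<sigma>\<^sup>2) \<in> borel_measurable M" by measurable
    show "AE x in M. norm (W x * (L x)\<^sup>2 * \<sigma>\<^sup>2) \<le> norm (2 * P x)"
      using WL2\<sigma>2_le W_nonneg P_nonneg by (intro AE_I2) simp
  qed
  have factor: "P x * exp (\<psi> (L x * (X x - \<mu>)) - (L x)\<^sup>2 * \<sigma>\<^sup>2 / 2) = W x * exp (\<psi> (L x * (X x - \<mu>)))"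
    for x by (simp add: W_def mult_ac flip: exp_add)
  note moment = integral_mult_exp_le_variance_bound[OF \<open>W \<in> borel_measurable F\<close>
      assms(2-4) W_nonneg W WL2\<sigma>2 X mean var exp_\<psi>_le]
  show "integrable M (\<lambda>x. P x * exp (\<psi> (L x * (X x - \<mu>)) - (L x)\<^sup>2 * \<sigma>\<^sup>2 / 2))"
    unfolding factor by (rule moment(1))
  have "(\<integral>x. W x + W x * (L x)\<^sup>2 * \<sigma>\<^sup>2 / 2 \<partial>M) \<le> (\<integral>x. P x \<partial>M)"
  proof (rule integral_mono)
    show "integrable M (\<lambda>x. W x + W x * (L x)\<^sup>2 * \<sigma>\<^sup>2 / 2)" using W WL2\<sigma>2 by simp
    fix x assume "x \<in> space M"
    then have "P x * (exp (- ((L x)\<^sup>2 * \<sigma>\<^sup>2) / 2) * (1 + (L x)\<^sup>2 * \<sigma>\<^sup>2 / 2)) \<le> P x * 1"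
      by (intro mult_left_mono[OF exp_neg_half_mult_le_one] P_nonneg)
    then show "W x + W x * (L x)\<^sup>2 * \<sigma>\<^sup>2 / 2 \<le> P x"
      by (simp add: W_def algebra_simps)
  qed (rule P)
  with moment(2) show "(\<integral>x. P x * exp (\<psi> (L x * (X x - \<mu>)) - (L x)\<^sup>2 * \<sigma>\<^sup>2 / 2) \<partial>M)
      \<le> (\<integral>x. P x \<partial>M)"
    unfolding factor by linarith
qed

end

lemma supermartingaleI_set_integral_Suc_le:
  fixes Y :: "nat \<Rightarrow> 'a \<Rightarrow> real"
  assumes "finite_measure M"
    and sub: "\<And>t. subalgebra M (F t)"
    and mono_F: "\<And>s t. s \<le> t \<Longrightarrow> sets (F s) \<subseteq> sets (F t)"
    and adapted: "\<And>t. Y t \<in> borel_measurable (F t)"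
    and integrable: "\<And>t. integrable M (Y t)"
    and set_integral_Suc_le: "\<And>t A. A \<in> sets (F t) \<Longrightarrow>
      (\<integral>x. indicator A x * Y (Suc t) x \<partial>M) \<le> (\<integral>x. indicator A x * Y t x \<partial>M)"
  shows "supermartingale M F Y"
proof -
  have set_integral_le: "(\<integral>x. indicator A x * Y t x \<partial>M) \<le> (\<integral>x. indicator A x * Y s x \<partial>M)"
    if "s \<le> t" and A: "A \<in> sets (F s)" for s t A
    using \<open>s \<le> t\<close>
  proof (induction t rule: dec_induct)
    case (step n)
    then show ?case using set_integral_Suc_le[of A n] mono_F[of s n] A by auto
  qed simp
  have "sigma_finite_subalgebra M (F s)" for s
    using assms(1) sub
    by (intro finite_measure_subalgebra_is_sigma_finite finite_measure_subalgebra.intro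
        finite_measure_subalgebra_axioms.intro)
  then show ?thesis
    unfolding supermartingale_def using adapted integrable set_integral_le
    by (auto intro!: sigma_finite_subalgebra.AE_real_cond_exp_le_of_set_integral_le)
qed

lemma supermartingale_prod:
  fixes g :: "nat \<Rightarrow> 'a \<Rightarrow> real"
  assumes "finite_measure M"
    and sub: "\<And>t. subalgebra M (F t)"
    and mono_F: "\<And>s t. s \<le> t \<Longrightarrow> sets (F s) \<subseteq> sets (F t)"
    and g_measurable: "\<And>i t. 1 \<le> i \<Longrightarrow> i \<le> t \<Longrightarrow> g i \<in> borel_measurable (F t)"
    and g_nonneg: "\<And>i x. x \<in> space M \<Longrightarrow> 0 \<le> g i x"
    and g_integrable: "\<And>t P. P \<in> borel_measurable (F t) \<Longrightarrow> (\<And>x. x \<in> space M \<Longrightarrow> 0 \<le> P x) \<Longrightarrow>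
      integrable M P \<Longrightarrow> integrable M (\<lambda>x. P x * g (Suc t) x)"
    and g_integral_le: "\<And>t P. P \<in> borel_measurable (F t) \<Longrightarrow> (\<And>x. x \<in> space M \<Longrightarrow> 0 \<le> P x) \<Longrightarrow>
      integrable M P \<Longrightarrow> (\<integral>x. P x * g (Suc t) x \<partial>M) \<le> (\<integral>x. P x \<partial>M)"
  shows "supermartingale M F (\<lambda>t x. \<Prod>i\<in>{1..t}. g i x)"
proof -
  interpret finite_measure M by (rule assms(1))
  define Y where "Y = (\<lambda>t x. \<Prod>i\<in>{1..t}. g i x)"
  have Y_Suc: "Y (Suc t) = (\<lambda>x. Y t x * g (Suc t) x)" for t unfolding Y_def by simp
  have Y_measurable [measurable]: "Y t \<in> borel_measurable (F t)" for t
    unfolding Y_def using g_measurable by (intro borel_measurable_prod) auto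
  have Y_nonneg: "0 \<le> Y t x" if "x \<in> space M" for t x
    unfolding Y_def using g_nonneg[OF that] by (simp add: prod_nonneg)
  have Y_integrable: "integrable M (Y t)" for t
  proof (induction t)
    case 0
    show ?case by (simp add: Y_def)
  next
    case (Suc t)
    then show ?case unfolding Y_Suc by (intro g_integrable Y_measurable Y_nonneg)
  qed
  have "(\<integral>x. indicator A x * Y (Suc t) x \<partial>M) \<le> (\<integral>x. indicator A x * Y t x \<partial>M)"
    if A: "A \<in> sets (F t)" for A t
  proof -
    have "A \<in> sets M" using A sub[of t] by (auto simp: subalgebra_def)
    then have "integrable M (\<lambda>x. indicator A x * Y t x)"
      using integrable_mult_indicator[OF _ Y_integrable] by simp
    moreover have "(\<lambda>x. indicator A x * Y t x) \<in> borel_measurable (F t)" using A by measurable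
    ultimately show ?thesis
      using g_integral_le[of "\<lambda>x. indicator A x * Y t x" t] Y_nonneg by (simp add: Y_Suc mult.assoc)
  qed
  then have "supermartingale M F Y"
    by (intro supermartingaleI_set_integral_Suc_le assms(1) sub mono_F Y_measurable Y_integrable)
  then show ?thesis unfolding Y_def .
qed

lemma supermartingale_prod_exp_increments:
  fixes M :: "'a measure" and F :: "nat \<Rightarrow> 'a measure"
    and X lam :: "nat \<Rightarrow> 'a \<Rightarrow> real" and \<mu> \<sigma> s :: real and \<psi> :: "real \<Rightarrow> real"
  assumes "finite_measure M"
    and sub: "\<And>t. subalgebra M (F t)"
    and mono_F: "\<And>s t. s \<le> t \<Longrightarrow> sets (F s) \<subseteq> sets (F t)"
    and adapted: "\<And>t. t \<ge> 1 \<Longrightarrow> X t \<in> borel_measurable (F t)"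
    and integ: "\<And>t. t \<ge> 1 \<Longrightarrow> integrable M (X t)"
    and mean: "\<And>t. t \<ge> 1 \<Longrightarrow> AE x in M. real_cond_exp M (F (t - 1)) (X t) x = \<mu>"
    and var: "\<And>t. t \<ge> 1 \<Longrightarrow>
        AE x in M. nn_cond_exp M (F (t - 1)) (\<lambda>y. ennreal ((X t y - \<mu>)\<^sup>2)) x \<le> ennreal (\<sigma>\<^sup>2)"
    and predictable: "\<And>t. t \<ge> 1 \<Longrightarrow> lam t \<in> borel_measurable (F (t - 1))"
    and [measurable]: "\<psi> \<in> borel_measurable borel"
    and exp_\<psi>_le: "\<And>y. exp (\<psi> y) \<le> 1 + s * y + y\<^sup>2 / 2"
  shows "supermartingale M F
    (\<lambda>t x. \<Prod>i\<in>{1..t}. exp (\<psi> (lam i x * (X i x - \<mu>)) - (lam i x)\<^sup>2 * \<sigma>\<^sup>2 / 2))"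
proof (rule supermartingale_prod[OF assms(1) sub mono_F])
  fix i t :: nat
  assume "1 \<le> i" "i \<le> t"
  then have sub_F: "subalgebra (F t) (F i)" "subalgebra (F t) (F (i - 1))"
    using sub mono_F unfolding subalgebra_def by auto
  have [measurable]: "X i \<in> borel_measurable (F t)" "lam i \<in> borel_measurable (F t)"
    using measurable_from_subalg[OF sub_F(1) adapted] measurable_from_subalg[OF sub_F(2) predictable]
      \<open>1 \<le> i\<close> by auto
  show "(\<lambda>x. exp (\<psi> (lam i x * (X i x - \<mu>)) - (lam i x)\<^sup>2 * \<sigma>\<^sup>2 / 2)) \<in> borel_measurable (F t)"
    by measurable
next
  fix t :: nat and P :: "'a \<Rightarrow> real"
  assume P: "P \<in> borel_measurable (F t)" "\<And>x. x \<in> space M \<Longrightarrow> 0 \<le> P x" "integrable M P"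
  interpret finite_measure_subalgebra M "F t"
    using assms(1) sub by (intro finite_measure_subalgebra.intro finite_measure_subalgebra_axioms.intro)
  have "X (Suc t) \<in> borel_measurable M" using measurable_from_subalg[OF sub adapted] by simp
  note step = integral_mult_exp_increment_le[OF P(1) predictable[of "Suc t", simplified] this
      \<open>\<psi> \<in> borel_measurable borel\<close> P(2,3) integ[of "Suc t", simplified]
      mean[of "Suc t", simplified] var[of "Suc t", simplified] exp_\<psi>_le]
  show "integrable M (\<lambda>x. P x * exp (\<psi> (lam (Suc t) x * (X (Suc t) x - \<mu>)) - (lam (Suc t) x)\<^sup>2 * \<sigma>\<^sup>2 / 2))"
    by (rule step(1))
  show "(\<integral>x. P x * exp (\<psi> (lam (Suc t) x * (X (Suc t) x - \<mu>)) - (lam (Suc t) x)\<^sup>2 * \<sigma>\<^sup>2 / 2) \<partial>M)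
      \<le> (\<integral>x. P x \<partial>M)"
    by (rule step(2))
qed auto

theorem lemma6:
  fixes M :: "'a measure" and F :: "nat \<Rightarrow> 'a measure"
    and X lam :: "nat \<Rightarrow> 'a \<Rightarrow> real" and \<mu> \<sigma> :: real and \<phi> :: "real \<Rightarrow> real"
  assumes prob: "prob_space M"
    and sub: "\<And>t. subalgebra M (F t)"
    and mono_F: "\<And>s t. s \<le> t \<Longrightarrow> sets (F s) \<subseteq> sets (F t)"
    and triv: "sets (F 0) = {{}, space M}"
    and adapted: "\<And>t. t \<ge> 1 \<Longrightarrow> X t \<in> borel_measurable (F t)"
    and integ: "\<And>t. t \<ge> 1 \<Longrightarrow> integrable M (X t)"
    and mean: "\<And>t. t \<ge> 1 \<Longrightarrow> AE x in M. real_cond_exp M (F (t - 1)) (X t) x = \<mu>"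
    and var: "\<And>t. t \<ge> 1 \<Longrightarrow>
        AE x in M. nn_cond_exp M (F (t - 1)) (\<lambda>y. ennreal ((X t y - \<mu>)\<^sup>2)) x \<le> ennreal (\<sigma>\<^sup>2)"
    and predictable: "\<And>t. t \<ge> 1 \<Longrightarrow> lam t \<in> borel_measurable (F (t - 1))"
    and catoni: "catoni_type \<phi>"
  shows "(\<forall>t. \<forall>x\<in>space M.
            0 \<le> (\<Prod>i\<in>{1..t}. exp (\<phi> (lam i x * (X i x - \<mu>)) - (lam i x)\<^sup>2 * \<sigma>\<^sup>2 / 2))) \<and>
         supermartingale M F
           (\<lambda>t x. \<Prod>i\<in>{1..t}. exp (\<phi> (lam i x * (X i x - \<mu>)) - (lam i x)\<^sup>2 * \<sigma>\<^sup>2 / 2)) \<and>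
         (\<forall>t. \<forall>x\<in>space M.
            0 \<le> (\<Prod>i\<in>{1..t}. exp (- \<phi> (lam i x * (X i x - \<mu>)) - (lam i x)\<^sup>2 * \<sigma>\<^sup>2 / 2))) \<and>
         supermartingale M F
           (\<lambda>t x. \<Prod>i\<in>{1..t}. exp (- \<phi> (lam i x * (X i x - \<mu>)) - (lam i x)\<^sup>2 * \<sigma>\<^sup>2 / 2))"
proof -
  have fin: "finite_measure M" using prob by (rule prob_space.finite_measure)
  have \<phi>_measurable: "\<phi> \<in> borel_measurable borel"
    using catoni unfolding catoni_type_def by (intro borel_measurable_mono) simp
  have "supermartingale M F
      (\<lambda>t x. \<Prod>i\<in>{1..t}. exp (\<phi> (lam i x * (X i x - \<mu>)) - (lam i x)\<^sup>2 * \<sigma>\<^sup>2 / 2))"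
    by (rule supermartingale_prod_exp_increments[where M = M and F = F and X = X and lam = lam
          and \<mu> = \<mu> and \<sigma> = \<sigma> and \<psi> = \<phi> and s = 1,
          OF fin sub mono_F adapted integ mean var predictable \<phi>_measurable])
      (use catoni_type_exp_le[OF catoni] in simp_all)
  moreover have "supermartingale M F
      (\<lambda>t x. \<Prod>i\<in>{1..t}. exp (- \<phi> (lam i x * (X i x - \<mu>)) - (lam i x)\<^sup>2 * \<sigma>\<^sup>2 / 2))"
    by (rule supermartingale_prod_exp_increments[where M = M and F = F and X = X and lam = lam
          and \<mu> = \<mu> and \<sigma> = \<sigma> and \<psi> = "\<lambda>y. - \<phi> y" and s = "-1",
          OF fin sub mono_F adapted integ mean var predictable
          borel_measurable_uminus[OF \<phi>_measurable]])
      (use catoni_type_exp_neg_le[OF catoni] in simp_all)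
  ultimately show ?thesis by (simp add: prod_nonneg)
qed

end
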